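(* Let $d\ge1$, $n\ge1$, and let $\{\boldsymbol{x}_i\}_{i=1}^n$ be an $n$-point jittered sampling point process on $\mathbb{S}^d$ associated with a partition $\{D_{i,n}\}_{i=1}^n$ and constant $c$ as described in the context. Then \[ \frac{n^2}{d+1}\le\mathbb{E}\big(\mathrm{FP}(\{\boldsymbol{x}_i\}_{i=1}^n)\big)\le\frac{n^2}{d+1}+n-n\left(1-\frac{c^2}{2n^{2/d}}\right)^2. \]
   Context: $\mathbb{S}^d=\{\boldsymbol{x}\in\mathbb{R}^{d+1}:\|\boldsymbol{x}\|=1\}$, $\sigma_d$ the normalized surface measure, $\mathrm{diam}\,A=\sup\{\|\boldsymbol{x}-\boldsymbol{y}\|:\boldsymbol{x},\boldsymbol{y}\in A\}$. Frame potential: $\mathrm{FP}(\{\boldsymbol{x}_i\}_{i=1}^n)=\sum_{i,j=1}^n|\langle\boldsymbol{x}_i,\boldsymbol{x}_j\rangle|^2$. Jittered sampling point process: let $\{D_{i,n}\}_{i=1}^n$ be an equal-area partition of $\mathbb{S}^d$: $\bigcup_{j=1}^nD_{j,n}=\mathbb{S}^d$, $\sigma_d(D_{j,n}\cap D_{k,n})=0$ for $j\ne k$, $\sigma_d(D_{j,n})=1/n$, and $\mathrm{diam}\,D_{j,n}\le c/n^{1/d}<\sqrt2$ for all $j$, where $c$ is a constant independent of $n$. Independently for each $i$, let $\boldsymbol{x}_i$ be a point chosen uniformly at random (w.r.t. normalized $\sigma_d$ restricted to $D_{i,n}$) from $D_{i,n}$. *)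

theory Defs
  imports "HOL-Probability.Probability"
begin

text \<open>Normalized surface measure on the unit sphere of a Euclidean space, realised as
  the cone measure: the push-forward of the uniform (normalized Lebesgue) distribution on
  the open unit ball under radial projection. It is a measure on the Borel sets of the
  ambient space, concentrated on the unit sphere.\<close>
definition sphere_measure :: "'a::euclidean_space measure" where
  "sphere_measure = distr (uniform_measure lborel (ball 0 1)) borel (\<lambda>x. x /\<^sub>R norm x)"

definition jittered :: "nat \<Rightarrow> (nat \<Rightarrow> 'a::euclidean_space set) \<Rightarrow> (nat \<Rightarrow> 'a) measure" where
  "jittered n D = PiM {..<n} (\<lambda>i. uniform_measure sphere_measure (D i))"

definition frame_potential :: "nat \<Rightarrow> (nat \<Rightarrow> 'a::real_inner) \<Rightarrow> real" where
  "frame_potential n x = (\<Sum>i<n. \<Sum>j<n. \<bar>x i \<bullet> x j\<bar>^2)"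

end

theory Submission
  imports Defs
begin

(* Write M P for the second-moment matrix E[x x^T] of a distribution P on the unit sphere and
   <A, B> for the Frobenius inner product. For independent unit vectors x_i ~ Q_i one has
   E (x_i . x_j)^2 = <M Q_i, M Q_j> if i ~= j and = 1 if i = j, hence
     E FP = || sum_i M Q_i ||^2 + sum_i (1 - || M Q_i ||^2).
   Since the cells tile the sphere with equal area, sum_i M Q_i = n M sigma_d, and
   M sigma_d = I / (d + 1) because sigma_d is invariant under coordinate reflections and
   transpositions; so the first term is n^2 / (d + 1). Finally || M Q_i ||^2 = E (x . y)^2 for
   independent x, y uniform on the i-th cell; it is at most 1, and at least (1 - delta^2/2)^2
   because |x - y|^2 = 2 - 2 x . y and the cells have diameter at most delta < sqrt 2. *)

section \<open>Uniform measures and finite products\<close>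

lemma (in finite_measure) integral_uniform_measure:
  fixes f :: "'a \<Rightarrow> real"
  assumes S: "S \<in> sets M" "measure M S \<noteq> 0" and f: "f \<in> borel_measurable M"
  shows "(\<integral>x. f x \<partial>uniform_measure M S) = (\<integral>x. indicator S x * f x \<partial>M) / measure M S"
proof -
  have pos: "0 < measure M S"
    using S(2) by (simp add: zero_less_measure_iff)
  have "uniform_measure M S = density M (\<lambda>x. ennreal (indicator S x / measure M S))"
    unfolding uniform_measure_def
    by (simp add: emeasure_eq_measure ennreal_indicator[symmetric] divide_ennreal pos)
  then have "(\<integral>x. f x \<partial>uniform_measure M S) = (\<integral>x. (indicator S x / measure M S) *\<^sub>R f x \<partial>M)"
    using S(1) f by (simp add: integral_density)
  also have "\<dots> = (\<integral>x. indicator S x * f x / measure M S \<partial>M)"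
    by simp
  finally show ?thesis
    by simp
qed

lemma (in finite_measure) sum_integral_indicator_partition:
  fixes f :: "'a \<Rightarrow> real"
  assumes I: "finite I" and D: "\<And>i. i \<in> I \<Longrightarrow> D i \<in> sets M"
    and cover: "AE x in M. x \<in> (\<Union>i\<in>I. D i)"
    and overlap: "\<And>i j. i \<in> I \<Longrightarrow> j \<in> I \<Longrightarrow> i \<noteq> j \<Longrightarrow> measure M (D i \<inter> D j) = 0"
    and f: "integrable M f"
  shows "(\<Sum>i\<in>I. \<integral>x. indicator (D i) x * f x \<partial>M) = (\<integral>x. f x \<partial>M)"
proof -
  have "AE x in M. x \<notin> D i \<inter> D j" if "i \<in> I" "j \<in> I" "i \<noteq> j" for i j
    using that D overlap by (intro AE_not_in) (auto simp: emeasure_eq_measure null_sets_def)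
  then have "AE x in M. \<forall>i\<in>I. \<forall>j\<in>I. i \<noteq> j \<longrightarrow> x \<notin> D i \<inter> D j"
    using I by (auto simp: AE_finite_all)
  then have ones: "AE x in M. (\<Sum>i\<in>I. indicator (D i) x) = (1::real)"
    using cover
  proof eventually_elim
    case (elim x)
    then obtain i where i: "i \<in> I" "x \<in> D i"
      by blast
    with elim have "(\<Sum>j\<in>I. indicator (D j) x) = (\<Sum>j\<in>I. if j = i then 1 else 0 :: real)"
      by (intro sum.cong) (auto split: split_indicator)
    then show ?case
      using i I by simp
  qed
  have "(\<Sum>i\<in>I. \<integral>x. indicator (D i) x * f x \<partial>M) = (\<integral>x. (\<Sum>i\<in>I. indicator (D i) x * f x) \<partial>M)"
    by (rule Bochner_Integration.integral_sum[symmetric]) (use D f integrable_mult_indicator[of _ M f] in auto)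
  also have "\<dots> = (\<integral>x. f x \<partial>M)"
  proof (rule integral_cong_AE)
    have "f \<in> borel_measurable M"
      using f by (rule borel_measurable_integrable)
    then show "(\<lambda>x. \<Sum>i\<in>I. indicator (D i) x * f x) \<in> borel_measurable M" "f \<in> borel_measurable M"
      using D by auto
    show "AE x in M. (\<Sum>i\<in>I. indicator (D i) x * f x) = f x"
      using ones by eventually_elim (simp add: sum_distrib_right[symmetric])
  qed
  finally show ?thesis .
qed

lemma integral_PiM_two_components:
  fixes Q :: "'i \<Rightarrow> 'a measure" and f g :: "'a \<Rightarrow> real"
  assumes Q: "\<And>k. prob_space (Q k)" and I: "finite I" "i \<in> I" "j \<in> I" "i \<noteq> j"
    and f: "integrable (Q i) f" and g: "integrable (Q j) g"
  shows "integrable (PiM I Q) (\<lambda>x. f (x i) * g (x j))"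
    and "(\<integral>x. f (x i) * g (x j) \<partial>PiM I Q) = (\<integral>y. f y \<partial>Q i) * (\<integral>y. g y \<partial>Q j)"
proof -
  interpret product_sigma_finite Q
    unfolding product_sigma_finite_def using Q prob_space_imp_sigma_finite by blast
  define F where "F k = (if k = i then f else if k = j then g else (\<lambda>_. 1))" for k
  have F_int: "integrable (Q k) (F k)" for k
    using f g Q by (auto simp: F_def intro: finite_measure.integrable_const prob_space.finite_measure)
  have two: "(\<Prod>k\<in>I. h k) = h i * h j" if "\<And>k. k \<in> I \<Longrightarrow> k \<noteq> i \<Longrightarrow> k \<noteq> j \<Longrightarrow> h k = 1"
    for h :: "'i \<Rightarrow> real"
  proof -
    have "(\<Prod>k\<in>I. h k) = (\<Prod>k\<in>{i, j}. h k)"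
      using I that by (intro prod.mono_neutral_right) auto
    then show ?thesis
      using I by simp
  qed
  have F_prod: "(\<lambda>x. \<Prod>k\<in>I. F k (x k)) = (\<lambda>x. f (x i) * g (x j))"
    using I by (subst two) (auto simp: F_def)
  show "integrable (PiM I Q) (\<lambda>x. f (x i) * g (x j))"
    using product_integrable_prod[OF I(1), of F] F_int by (simp add: F_prod)
  have "(\<integral>x. f (x i) * g (x j) \<partial>PiM I Q) = (\<Prod>k\<in>I. \<integral>y. F k y \<partial>Q k)"
    using product_integral_prod[OF I(1), of F] F_int by (simp add: F_prod)
  also have "\<dots> = (\<integral>y. F i y \<partial>Q i) * (\<integral>y. F j y \<partial>Q j)"
    using Q by (intro two) (simp add: F_def prob_space.prob_space)
  finally show "(\<integral>x. f (x i) * g (x j) \<partial>PiM I Q) = (\<integral>y. f y \<partial>Q i) * (\<integral>y. g y \<partial>Q j)"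
    using I by (simp add: F_def)
qed

section \<open>Symmetries of the sphere measure\<close>

lemma prob_space_uniform_ball:
  "prob_space (uniform_measure lborel (ball (0::'a::euclidean_space) 1))"
proof (rule prob_space_uniform_measure)
  have "unit_ball_vol (real DIM('a)) \<noteq> 0"
    using unit_ball_vol_pos[of "real DIM('a)"] by linarith
  then show "emeasure lborel (ball (0::'a) 1) \<noteq> 0"
    by (simp add: emeasure_ball)
qed (use emeasure_lborel_ball_finite in \<open>auto simp: less_top\<close>)

lemma borel_measurable_orthogonal_transformation:
  fixes T :: "'a::euclidean_space \<Rightarrow> 'a"
  assumes "orthogonal_transformation T"
  shows "T \<in> borel_measurable borel"
  using assms orthogonal_transformation_linear linear_conv_bounded_linear
  by (blast intro: borel_measurable_continuous_onI linear_continuous_on)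

(* Invariance of Lebesgue measure under orthogonal maps is proved in the library only for
   real^'n, so here it is a hypothesis; it is checked below for coordinate reflections and
   coordinate permutations, which suffice. *)
lemma distr_uniform_ball_orthogonal:
  fixes T :: "'a::euclidean_space \<Rightarrow> 'a"
  assumes T: "orthogonal_transformation T" and lborel_T: "distr lborel borel T = lborel"
  shows "distr (uniform_measure lborel (ball 0 1)) borel T = uniform_measure lborel (ball 0 1)"
proof (rule measure_eqI)
  have [measurable]: "T \<in> borel_measurable borel"
    using T by (rule borel_measurable_orthogonal_transformation)
  fix A assume "A \<in> sets (distr (uniform_measure lborel (ball 0 1)) borel T)"
  then have [measurable]: "A \<in> sets borel" by simp
  have ball_T: "ball 0 1 \<inter> T -` A = T -` (A \<inter> ball 0 1)"
    using T by (auto simp: orthogonal_transformation_norm)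
  have "T -` A \<in> sets borel"
    using measurable_sets_borel[OF borel_measurable_orthogonal_transformation[OF T]] by simp
  have "emeasure (distr (uniform_measure lborel (ball 0 1)) borel T) A
      = emeasure (uniform_measure lborel (ball 0 1)) (T -` A)"
    by (simp add: emeasure_distr)
  also have "\<dots> = emeasure lborel (ball 0 1 \<inter> T -` A) / emeasure lborel (ball (0::'a) 1)"
    by (subst emeasure_uniform_measure) (use \<open>T -` A \<in> sets borel\<close> in auto)
  also have "emeasure lborel (ball 0 1 \<inter> T -` A) = emeasure (distr lborel borel T) (A \<inter> ball 0 1)"
    by (subst emeasure_distr) (auto simp: ball_T)
  finally show "emeasure (distr (uniform_measure lborel (ball 0 1)) borel T) A
      = emeasure (uniform_measure lborel (ball 0 1)) A"
    by (simp add: lborel_T emeasure_uniform_measure Int_commute)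
qed simp

lemma sets_sphere_measure [simp, measurable_cong]: "sets sphere_measure = sets borel"
  by (simp add: sphere_measure_def)

lemma prob_space_sphere_measure: "prob_space sphere_measure"
  unfolding sphere_measure_def
  by (intro prob_space.prob_space_distr prob_space_uniform_ball) measurable

lemma AE_sphere_measure_norm: "AE x in sphere_measure. norm x = 1"
proof -
  have "AE x in uniform_measure lborel (ball (0::'a) 1). x \<noteq> 0"
    by (rule AE_uniform_measureI) (auto intro: AE_I[where N="{0}"])
  moreover have "{x::'a. norm x = 1} \<in> sets borel"
    by measurable
  ultimately show ?thesis
    unfolding sphere_measure_def by (subst AE_distr_iff) (auto elim: AE_mp)
qed

lemma sphere_measure_distr_orthogonal:
  fixes T :: "'a::euclidean_space \<Rightarrow> 'a"
  assumes T: "orthogonal_transformation T" and lborel_T: "distr lborel borel T = lborel"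
  shows "distr sphere_measure borel T = sphere_measure"
proof -
  let ?U = "uniform_measure lborel (ball (0::'a) 1)"
  have [measurable]: "T \<in> borel_measurable borel"
    using T by (rule borel_measurable_orthogonal_transformation)
  have radial_T: "T (x /\<^sub>R norm x) = T x /\<^sub>R norm (T x)" for x
    using T by (simp add: orthogonal_transformation_norm orthogonal_transformation_scaleR)
  have "distr sphere_measure borel T = distr ?U borel (\<lambda>x. T (x /\<^sub>R norm x))"
    unfolding sphere_measure_def by (subst distr_distr) (auto simp: comp_def)
  also have "\<dots> = distr (distr ?U borel T) borel (\<lambda>x. x /\<^sub>R norm x)"
    unfolding radial_T by (subst distr_distr) (auto simp: comp_def)
  also have "\<dots> = sphere_measure"
    by (simp add: distr_uniform_ball_orthogonal[OF T lborel_T] sphere_measure_def)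
  finally show ?thesis .
qed

lemma integral_sphere_measure_orthogonal:
  fixes T :: "'a::euclidean_space \<Rightarrow> 'a" and f :: "'a \<Rightarrow> real"
  assumes T: "orthogonal_transformation T" and lborel_T: "distr lborel borel T = lborel"
    and f: "f \<in> borel_measurable borel"
  shows "(\<integral>x. f (T x) \<partial>sphere_measure) = (\<integral>x. f x \<partial>sphere_measure)"
proof -
  have "T \<in> sphere_measure \<rightarrow>\<^sub>M borel"
    using borel_measurable_orthogonal_transformation[OF T] by simp
  then show ?thesis
    using integral_distr[of T sphere_measure borel f] f
    by (simp add: sphere_measure_distr_orthogonal[OF T lborel_T])
qed

definition reflect_along :: "'a::real_inner \<Rightarrow> 'a \<Rightarrow> 'a" where
  "reflect_along b x = x - (2 * (x \<bullet> b)) *\<^sub>R b"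

lemma orthogonal_transformation_reflect_along:
  fixes b :: "'a::euclidean_space"
  assumes "norm b = 1"
  shows "orthogonal_transformation (reflect_along b)"
  unfolding orthogonal_transformation_def
proof (intro conjI allI)
  show "linear (reflect_along b)"
    unfolding reflect_along_def by (intro bounded_linear.linear bounded_linear_intros)
  have "b \<bullet> b = 1"
    using assms by (simp add: norm_eq_1)
  then show "reflect_along b v \<bullet> reflect_along b w = v \<bullet> w" for v w
    by (simp add: reflect_along_def inner_diff_left inner_diff_right inner_commute)
qed

lemma reflect_along_inner_Basis:
  fixes b :: "'a::euclidean_space"
  assumes "b \<in> Basis" "j \<in> Basis"
  shows "reflect_along b x \<bullet> j = (if j = b then - 1 else 1) * (x \<bullet> j)"
  using assms by (auto simp: reflect_along_def inner_diff_left inner_Basis)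

lemma lborel_distr_reflect_along:
  fixes b :: "'a::euclidean_space"
  assumes "b \<in> Basis"
  shows "distr lborel borel (reflect_along b) = lborel"
proof -
  let ?c = "\<lambda>j::'a. if j = b then - 1 else 1 :: real"
  have "reflect_along b = (\<lambda>x. 0 + (\<Sum>j\<in>Basis. (?c j * (x \<bullet> j)) *\<^sub>R j))"
    using assms by (simp add: fun_eq_iff euclidean_representation_sum' reflect_along_inner_Basis)
  moreover have "lborel = density (distr lborel borel (\<lambda>x. 0 + (\<Sum>j\<in>Basis. (?c j * (x \<bullet> j)) *\<^sub>R j)))
      (\<lambda>_. \<Prod>j\<in>Basis. \<bar>?c j\<bar>)"
    by (rule lborel_affine_euclidean) simp
  moreover have "(\<Prod>j\<in>Basis. \<bar>?c j\<bar>) = 1"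
    by (simp add: if_distrib cong: if_cong)
  ultimately show ?thesis
    by (simp add: density_1)
qed

definition permute_coords :: "('a \<Rightarrow> 'a) \<Rightarrow> 'a::euclidean_space \<Rightarrow> 'a" where
  "permute_coords p x = (\<Sum>j\<in>Basis. (x \<bullet> p j) *\<^sub>R j)"

lemma permute_coords_inner_Basis: "j \<in> Basis \<Longrightarrow> permute_coords p x \<bullet> j = x \<bullet> p j"
  by (simp add: permute_coords_def inner_sum_left inner_Basis if_distrib cong: if_cong)

lemma orthogonal_transformation_permute_coords:
  assumes p: "p permutes Basis"
  shows "orthogonal_transformation (permute_coords p)"
  unfolding orthogonal_transformation_def
proof (intro conjI allI)
  show "linear (permute_coords p)"
    unfolding permute_coords_def by (intro bounded_linear.linear bounded_linear_intros)
  fix v w :: 'a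
  have "permute_coords p v \<bullet> permute_coords p w = (\<Sum>j\<in>Basis. (v \<bullet> p j) * (w \<bullet> p j))"
    by (subst euclidean_inner) (simp add: permute_coords_inner_Basis)
  also have "\<dots> = (\<Sum>j\<in>Basis. (v \<bullet> j) * (w \<bullet> j))"
    using sum.permute[OF p, of "\<lambda>j. (v \<bullet> j) * (w \<bullet> j)"] by (simp add: comp_def)
  also have "\<dots> = v \<bullet> w"
    by (simp add: euclidean_inner[of v w])
  finally show "permute_coords p v \<bullet> permute_coords p w = v \<bullet> w" .
qed

lemma lborel_distr_permute_coords:
  fixes p :: "'a::euclidean_space \<Rightarrow> 'a"
  assumes p: "p permutes Basis"
  shows "distr lborel borel (permute_coords p) = lborel"
proof (rule lborel_eqI[symmetric])
  have [measurable]: "permute_coords p \<in> borel_measurable borel"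
    by (rule borel_measurable_orthogonal_transformation[OF orthogonal_transformation_permute_coords[OF p]])
  have p_Basis: "p j \<in> Basis \<longleftrightarrow> j \<in> Basis" "inv p j \<in> Basis \<longleftrightarrow> j \<in> Basis" for j
    using permutes_in_image[OF p] permutes_in_image[OF permutes_inv[OF p]] by auto
  fix l u :: 'a
  assume le: "\<And>j. j \<in> Basis \<Longrightarrow> l \<bullet> j \<le> u \<bullet> j"
  have "permute_coords p -` box l u = box (permute_coords (inv p) l) (permute_coords (inv p) u)"
  proof -
    have "(\<forall>j\<in>Basis. l \<bullet> j < x \<bullet> p j \<and> x \<bullet> p j < u \<bullet> j)
        \<longleftrightarrow> (\<forall>k\<in>Basis. l \<bullet> inv p k < x \<bullet> k \<and> x \<bullet> k < u \<bullet> inv p k)" for x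
      using p_Basis by (metis permutes_inverses[OF p])
    then show ?thesis
      by (auto simp: mem_box permute_coords_inner_Basis)
  qed
  then have "emeasure (distr lborel borel (permute_coords p)) (box l u)
      = (\<Prod>k\<in>Basis. (u - l) \<bullet> inv p k)"
    using le p_Basis
    by (simp add: emeasure_distr emeasure_lborel_box_eq permute_coords_inner_Basis inner_diff_left)
  also have "\<dots> = (\<Prod>k\<in>Basis. (u - l) \<bullet> k)"
    using prod.permute[OF permutes_inv[OF p], of "\<lambda>k. (u - l) \<bullet> k"] by (simp add: comp_def)
  finally show "emeasure (distr lborel borel (permute_coords p)) (box l u) = (\<Prod>k\<in>Basis. (u - l) \<bullet> k)" .
qed simp

section \<open>Second moments of distributions on the unit sphere\<close>

definition second_moment :: "'a::euclidean_space measure \<Rightarrow> 'a \<Rightarrow> 'a \<Rightarrow> real" where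
  "second_moment P u v = (\<integral>x. (x \<bullet> u) * (x \<bullet> v) \<partial>P)"

definition moment_inner :: "'a::euclidean_space measure \<Rightarrow> 'a measure \<Rightarrow> real" where
  "moment_inner P Q = (\<Sum>b\<in>Basis. \<Sum>b'\<in>Basis. second_moment P b b' * second_moment Q b b')"

locale unit_sphere_distribution = prob_space P for P :: "'a::euclidean_space measure" +
  assumes sets_eq_borel: "sets P = sets borel"
    and AE_norm_eq_1: "AE x in P. norm x = 1"
begin

lemma integrable_bounded_on_sphere:
  fixes f :: "'a \<Rightarrow> real"
  assumes "f \<in> borel_measurable borel" and "\<And>x. norm x = 1 \<Longrightarrow> \<bar>f x\<bar> \<le> B"
  shows "integrable P f"
proof (rule integrable_const_bound[where B=B])
  show "AE x in P. norm (f x) \<le> B"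
    using AE_norm_eq_1 by eventually_elim (simp add: assms(2))
  show "f \<in> borel_measurable P"
    using assms(1) measurable_cong_sets[OF sets_eq_borel refl] by blast
qed

lemma integrable_inner_mult: "integrable P (\<lambda>x. (x \<bullet> u) * (x \<bullet> v))"
proof (rule integrable_bounded_on_sphere[where B = "norm u * norm v"])
  fix x :: 'a
  assume "norm x = 1"
  then have "\<bar>x \<bullet> u\<bar> \<le> norm u" "\<bar>x \<bullet> v\<bar> \<le> norm v"
    using Cauchy_Schwarz_ineq2[of x] by auto
  then show "\<bar>(x \<bullet> u) * (x \<bullet> v)\<bar> \<le> norm u * norm v"
    by (simp add: abs_mult mult_mono)
qed simp

lemma integrable_inner_square: "integrable P (\<lambda>y. (x \<bullet> y)\<^sup>2)"
  using integrable_inner_mult[of x x] by (simp add: power2_eq_square inner_commute)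

lemma sum_second_moment_Basis: "(\<Sum>b\<in>Basis. second_moment P b b) = 1"
proof -
  have "(\<Sum>b\<in>Basis. second_moment P b b) = (\<integral>x. (\<Sum>b\<in>Basis. (x \<bullet> b) * (x \<bullet> b)) \<partial>P)"
    unfolding second_moment_def by (simp add: integrable_inner_mult)
  also have "\<dots> = (\<integral>x. 1 \<partial>P)"
  proof (rule integral_cong_AE)
    show "AE x in P. (\<Sum>b\<in>Basis. (x \<bullet> b) * (x \<bullet> b)) = 1"
      using AE_norm_eq_1 by eventually_elim (simp add: euclidean_inner[symmetric] norm_eq_1)
  qed (auto simp: sets_eq_borel measurable_cong_sets[OF sets_eq_borel refl])
  finally show ?thesis
    by (simp add: prob_space)
qed

lemma integral_inner_square:
  "(\<integral>y. (x \<bullet> y)\<^sup>2 \<partial>P) = (\<Sum>b\<in>Basis. \<Sum>b'\<in>Basis. (x \<bullet> b) * (x \<bullet> b') * second_moment P b b')"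
proof -
  have "(x \<bullet> y)\<^sup>2 = (\<Sum>b\<in>Basis. \<Sum>b'\<in>Basis. (x \<bullet> b) * (x \<bullet> b') * ((y \<bullet> b) * (y \<bullet> b')))" for y
    by (subst euclidean_inner) (simp add: power2_eq_square sum_product algebra_simps)
  then show ?thesis
    by (simp add: second_moment_def integrable_inner_mult)
qed

lemma integrable_integral_inner_square: "integrable P (\<lambda>x. \<integral>y. (x \<bullet> y)\<^sup>2 \<partial>P)"
  unfolding integral_inner_square by (simp add: integrable_inner_mult)

lemma moment_inner_self: "moment_inner P P = (\<integral>x. (\<integral>y. (x \<bullet> y)\<^sup>2 \<partial>P) \<partial>P)"
  unfolding integral_inner_square
  by (simp add: moment_inner_def integrable_inner_mult second_moment_def)

lemma moment_inner_self_le_1: "moment_inner P P \<le> 1"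
proof -
  have "AE x in P. (\<integral>y. (x \<bullet> y)\<^sup>2 \<partial>P) \<le> 1"
    using AE_norm_eq_1
  proof eventually_elim
    case (elim x)
    have "AE y in P. (x \<bullet> y)\<^sup>2 \<le> 1"
      using AE_norm_eq_1
    proof eventually_elim
      case (elim y)
      with \<open>norm x = 1\<close> have "\<bar>x \<bullet> y\<bar> \<le> 1"
        using Cauchy_Schwarz_ineq2[of x y] by simp
      then show ?case
        by (simp add: abs_square_le_1)
    qed
    then have "(\<integral>y. (x \<bullet> y)\<^sup>2 \<partial>P) \<le> (\<integral>y. 1 \<partial>P)"
      by (intro integral_mono_AE) (auto simp: integrable_inner_square)
    then show ?case
      by (simp add: prob_space)
  qed
  then have "(\<integral>x. (\<integral>y. (x \<bullet> y)\<^sup>2 \<partial>P) \<partial>P) \<le> (\<integral>x. 1 \<partial>P)"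
    by (intro integral_mono_AE) (auto simp: integrable_integral_inner_square)
  then show ?thesis
    by (simp add: moment_inner_self prob_space)
qed

lemma moment_inner_self_ge:
  assumes "AE x in P. x \<in> A"
    and "\<And>x y. x \<in> A \<Longrightarrow> y \<in> A \<Longrightarrow> norm x = 1 \<Longrightarrow> norm y = 1 \<Longrightarrow> L \<le> (x \<bullet> y)\<^sup>2"
  shows "L \<le> moment_inner P P"
proof -
  have "AE x in P. L \<le> (\<integral>y. (x \<bullet> y)\<^sup>2 \<partial>P)"
    using AE_norm_eq_1 assms(1)
  proof eventually_elim
    case (elim x)
    have "AE y in P. L \<le> (x \<bullet> y)\<^sup>2"
      using AE_norm_eq_1 assms(1) by eventually_elim (use elim assms(2) in auto)
    then have "(\<integral>y. L \<partial>P) \<le> (\<integral>y. (x \<bullet> y)\<^sup>2 \<partial>P)"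
      by (intro integral_mono_AE) (auto simp: integrable_inner_square)
    then show ?case
      by (simp add: prob_space)
  qed
  then have "(\<integral>x. L \<partial>P) \<le> (\<integral>x. (\<integral>y. (x \<bullet> y)\<^sup>2 \<partial>P) \<partial>P)"
    by (intro integral_mono_AE) (auto simp: integrable_integral_inner_square)
  then show ?thesis
    by (simp add: moment_inner_self prob_space)
qed

end

lemma unit_sphere_distribution_sphere_measure: "unit_sphere_distribution sphere_measure"
  unfolding unit_sphere_distribution_def unit_sphere_distribution_axioms_def
  using prob_space_sphere_measure AE_sphere_measure_norm by simp

lemma unit_sphere_distribution_uniform_measure:
  assumes "unit_sphere_distribution P" and A: "A \<in> sets borel" "measure P A \<noteq> 0"
  shows "unit_sphere_distribution (uniform_measure P A)"
    and "AE x in uniform_measure P A. x \<in> A"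
proof -
  interpret unit_sphere_distribution P by fact
  have A_fin: "emeasure P A \<noteq> 0" "emeasure P A < \<infinity>"
    using A by (auto simp: emeasure_eq_measure sets_eq_borel)
  show "AE x in uniform_measure P A. x \<in> A"
    using A_fin by (simp add: AE_uniform_measure)
  have "AE x in uniform_measure P A. norm x = 1"
    using A_fin AE_norm_eq_1 by (auto simp: AE_uniform_measure elim: AE_mp)
  moreover have "prob_space (uniform_measure P A)"
    using A_fin by (intro prob_space_uniform_measure) auto
  ultimately show "unit_sphere_distribution (uniform_measure P A)"
    by (simp add: unit_sphere_distribution_def unit_sphere_distribution_axioms_def sets_eq_borel)
qed

lemma second_moment_sphere_measure_orthogonal:
  fixes T :: "'a::euclidean_space \<Rightarrow> 'a"
  assumes "orthogonal_transformation T" and "distr lborel borel T = lborel"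
  shows "(\<integral>x. (T x \<bullet> u) * (T x \<bullet> v) \<partial>sphere_measure) = second_moment sphere_measure u v"
  unfolding second_moment_def by (rule integral_sphere_measure_orthogonal[OF assms]) simp

lemma second_moment_sphere_measure_off_diag:
  fixes b b' :: "'a::euclidean_space"
  assumes "b \<in> Basis" "b' \<in> Basis" "b \<noteq> b'"
  shows "second_moment sphere_measure b b' = 0"
proof -
  have "second_moment sphere_measure b b' = (\<integral>x. - ((x \<bullet> b) * (x \<bullet> b')) \<partial>sphere_measure)"
    using second_moment_sphere_measure_orthogonal[OF
        orthogonal_transformation_reflect_along lborel_distr_reflect_along, of b b b'] assms
    by (simp add: reflect_along_inner_Basis)
  then show ?thesis
    by (simp add: second_moment_def)
qed

lemma second_moment_sphere_measure_diag:
  fixes b :: "'a::euclidean_space"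
  assumes "b \<in> Basis"
  shows "second_moment sphere_measure b b = 1 / DIM('a)"
proof -
  have swap: "second_moment sphere_measure b' b' = second_moment sphere_measure b b"
    if "b' \<in> Basis" for b' :: 'a
  proof -
    have p: "Transposition.transpose b b' permutes Basis"
      using assms that by (rule permutes_swap_id)
    show ?thesis
      using second_moment_sphere_measure_orthogonal[OF orthogonal_transformation_permute_coords[OF p]
          lborel_distr_permute_coords[OF p], of b' b'] that
      by (simp add: permute_coords_inner_Basis second_moment_def)
  qed
  have "1 = (\<Sum>b'\<in>(Basis::'a set). second_moment sphere_measure b' b')"
    by (rule unit_sphere_distribution.sum_second_moment_Basis[OF
          unit_sphere_distribution_sphere_measure, symmetric])
  also have "\<dots> = real DIM('a) * second_moment sphere_measure b b"
    by (simp add: swap)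
  finally have "real DIM('a) * second_moment sphere_measure b b = 1" ..
  then show ?thesis
    by (simp add: field_simps)
qed

lemma sum_square_second_moment_sphere_measure:
  "(\<Sum>b\<in>(Basis::'a::euclidean_space set). \<Sum>b'\<in>Basis. (t * second_moment sphere_measure b b')\<^sup>2)
    = t\<^sup>2 / DIM('a)"
proof -
  have "(t * second_moment sphere_measure b b')\<^sup>2 = (if b = b' then (t / DIM('a))\<^sup>2 else 0)"
    if "b \<in> Basis" "b' \<in> Basis" for b b' :: 'a
    using that by (simp add: second_moment_sphere_measure_off_diag second_moment_sphere_measure_diag)
  then have "(\<Sum>b\<in>(Basis::'a set). \<Sum>b'\<in>Basis. (t * second_moment sphere_measure b b')\<^sup>2)
      = (\<Sum>b\<in>(Basis::'a set). (t / DIM('a))\<^sup>2)"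
    by (simp cong: sum.cong)
  then show ?thesis
    by (simp add: power2_eq_square)
qed

lemma inner_square_ge_of_dist_le:
  fixes x y :: "'a::real_inner"
  assumes "norm x = 1" "norm y = 1" "dist x y \<le> \<delta>" "\<delta> < sqrt 2"
  shows "(1 - \<delta>\<^sup>2 / 2)\<^sup>2 \<le> (x \<bullet> y)\<^sup>2"
proof -
  have "0 \<le> \<delta>"
    using assms(3) zero_le_dist order_trans by blast
  then have "\<delta>\<^sup>2 < 2"
    using assms(4) by (metis real_sqrt_less_iff real_sqrt_abs abs_of_nonneg)
  have "(dist x y)\<^sup>2 = 2 - 2 * (x \<bullet> y)"
    using assms(1,2)
    by (simp add: dist_norm power2_norm_eq_inner inner_diff_left inner_diff_right inner_commute
        norm_eq_1)
  moreover have "(dist x y)\<^sup>2 \<le> \<delta>\<^sup>2"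
    using assms(3) by (simp add: power_mono)
  ultimately have "1 - \<delta>\<^sup>2 / 2 \<le> x \<bullet> y"
    by linarith
  with \<open>\<delta>\<^sup>2 < 2\<close> show ?thesis
    by (intro power_mono) auto
qed

lemma moment_inner_uniform_sphere_measure_ge:
  fixes D :: "'a::euclidean_space set"
  assumes D: "D \<in> sets borel" "D \<subseteq> sphere 0 1" "measure sphere_measure D \<noteq> 0"
    and diam: "diameter D \<le> \<delta>" and small: "\<delta> < sqrt 2"
  shows "(1 - \<delta>\<^sup>2 / 2)\<^sup>2 \<le> moment_inner (uniform_measure sphere_measure D) (uniform_measure sphere_measure D)"
proof -
  note U = unit_sphere_distribution_uniform_measure[OF unit_sphere_distribution_sphere_measure D(1,3)]
  have "bounded D"
    using D(2) bounded_subset[OF bounded_sphere] by blast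
  then have "(1 - \<delta>\<^sup>2 / 2)\<^sup>2 \<le> (x \<bullet> y)\<^sup>2"
    if "x \<in> D" "y \<in> D" "norm x = 1" "norm y = 1" for x y
    using diameter_bounded_bound[OF _ that(1,2)] diam small that(3,4)
    by (intro inner_square_ge_of_dist_le) auto
  then show ?thesis
    using unit_sphere_distribution.moment_inner_self_ge[OF U] by blast
qed

section \<open>The expected frame potential\<close>

lemma integral_inner_square_PiM:
  fixes Q :: "'i \<Rightarrow> 'a::euclidean_space measure"
  assumes Q: "\<And>k. unit_sphere_distribution (Q k)" and I: "finite I" "i \<in> I" "j \<in> I"
  shows "integrable (PiM I Q) (\<lambda>x. (x i \<bullet> x j)\<^sup>2)
    \<and> (\<integral>x. (x i \<bullet> x j)\<^sup>2 \<partial>PiM I Q) = (if i = j then 1 else moment_inner (Q i) (Q j))"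
proof -
  have Q_prob: "prob_space (Q k)" for k
    using Q by (simp add: unit_sphere_distribution_def)
  show ?thesis
  proof (cases "i = j")
    case True
    interpret Pi: prob_space "PiM I Q"
      using Q_prob by (rule prob_space_PiM)
    have "(\<lambda>y::'a. (y \<bullet> y)\<^sup>2) \<in> borel_measurable borel"
      by measurable
    then have "(\<lambda>y. (y \<bullet> y)\<^sup>2) \<in> borel_measurable (Q i)"
      using measurable_cong_sets[OF unit_sphere_distribution.sets_eq_borel[OF Q] refl] by blast
    then have meas: "(\<lambda>x. (x i \<bullet> x i)\<^sup>2) \<in> borel_measurable (PiM I Q)"
      using I(2) by (rule measurable_PiM_component_rev[rotated])
    have "AE x in PiM I Q. norm (x i) = 1"
      using Q_prob I(2) unit_sphere_distribution.AE_norm_eq_1[OF Q] by (rule AE_PiM_component)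
    then have ones: "AE x in PiM I Q. (x i \<bullet> x i)\<^sup>2 = 1"
      by eventually_elim (simp add: power2_norm_eq_inner[symmetric])
    have "integrable (PiM I Q) (\<lambda>x. (x i \<bullet> x i)\<^sup>2)"
      using Bochner_Integration.integrable_cong_AE[OF meas _ ones] by simp
    moreover have "(\<integral>x. (x i \<bullet> x i)\<^sup>2 \<partial>PiM I Q) = 1"
      using integral_cong_AE[OF meas _ ones] by (simp add: Pi.prob_space)
    ultimately show ?thesis
      using True by simp
  next
    case False
    note two = integral_PiM_two_components[OF Q_prob I False
        unit_sphere_distribution.integrable_inner_mult[OF Q]
        unit_sphere_distribution.integrable_inner_mult[OF Q]]
    have "(x i \<bullet> x j)\<^sup>2 = (\<Sum>b\<in>Basis. \<Sum>b'\<in>Basis.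
        ((x i \<bullet> b) * (x i \<bullet> b')) * ((x j \<bullet> b) * (x j \<bullet> b')))" for x :: "'i \<Rightarrow> 'a"
      by (subst euclidean_inner) (simp add: power2_eq_square sum_product algebra_simps)
    then show ?thesis
      using False two by (simp add: moment_inner_def second_moment_def)
  qed
qed

lemma sum_moment_inner:
  "(\<Sum>i\<in>I. \<Sum>j\<in>I. moment_inner (Q i) (Q j))
    = (\<Sum>b\<in>Basis. \<Sum>b'\<in>Basis. (\<Sum>i\<in>I. second_moment (Q i) b b')\<^sup>2)"
proof -
  let ?m = "\<lambda>i b b'. second_moment (Q i) b b'"
  have "(\<Sum>b\<in>Basis. \<Sum>b'\<in>Basis. (\<Sum>i\<in>I. ?m i b b')\<^sup>2)
      = (\<Sum>b\<in>Basis. \<Sum>b'\<in>Basis. \<Sum>i\<in>I. \<Sum>j\<in>I. ?m i b b' * ?m j b b')"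
    by (simp add: power2_eq_square sum_product)
  also have "\<dots> = (\<Sum>b\<in>Basis. \<Sum>i\<in>I. \<Sum>b'\<in>Basis. \<Sum>j\<in>I. ?m i b b' * ?m j b b')"
    by (rule sum.cong[OF refl], rule sum.swap)
  also have "\<dots> = (\<Sum>b\<in>Basis. \<Sum>i\<in>I. \<Sum>j\<in>I. \<Sum>b'\<in>Basis. ?m i b b' * ?m j b b')"
    by (rule sum.cong[OF refl], rule sum.cong[OF refl], rule sum.swap)
  also have "\<dots> = (\<Sum>i\<in>I. \<Sum>b\<in>Basis. \<Sum>j\<in>I. \<Sum>b'\<in>Basis. ?m i b b' * ?m j b b')"
    by (rule sum.swap)
  also have "\<dots> = (\<Sum>i\<in>I. \<Sum>j\<in>I. moment_inner (Q i) (Q j))"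
    unfolding moment_inner_def by (rule sum.cong[OF refl], rule sum.swap)
  finally show ?thesis ..
qed

lemma integral_frame_potential_PiM:
  fixes Q :: "nat \<Rightarrow> 'a::euclidean_space measure"
  assumes Q: "\<And>k. unit_sphere_distribution (Q k)"
  shows "(\<integral>x. frame_potential n x \<partial>PiM {..<n} Q)
    = (\<Sum>i<n. \<Sum>j<n. moment_inner (Q i) (Q j)) + (\<Sum>i<n. 1 - moment_inner (Q i) (Q i))"
proof -
  note pair = integral_inner_square_PiM[OF Q finite_lessThan]
  have "(\<integral>x. frame_potential n x \<partial>PiM {..<n} Q) = (\<Sum>i<n. \<integral>x. (\<Sum>j<n. (x i \<bullet> x j)\<^sup>2) \<partial>PiM {..<n} Q)"
    unfolding frame_potential_def power2_abs
    by (rule Bochner_Integration.integral_sum) (use pair in \<open>auto intro!: integrable_sum\<close>)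
  also have "\<dots> = (\<Sum>i<n. \<Sum>j<n. \<integral>x. (x i \<bullet> x j)\<^sup>2 \<partial>PiM {..<n} Q)"
    by (intro sum.cong refl Bochner_Integration.integral_sum) (use pair in auto)
  also have "\<dots> = (\<Sum>i<n. \<Sum>j<n. if i = j then 1 else moment_inner (Q i) (Q j))"
    by (intro sum.cong refl) (simp add: pair)
  also have "\<dots> = (\<Sum>i<n. \<Sum>j<n. moment_inner (Q i) (Q j)
      + (if i = j then 1 - moment_inner (Q i) (Q i) else 0))"
    by (intro sum.cong) auto
  also have "\<dots> = (\<Sum>i<n. (\<Sum>j<n. moment_inner (Q i) (Q j)) + (1 - moment_inner (Q i) (Q i)))"
    by (intro sum.cong) (auto simp: sum.distrib)
  finally show ?thesis
    by (simp add: sum.distrib)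
qed

lemma sum_second_moment_partition:
  fixes D :: "nat \<Rightarrow> 'a::euclidean_space set"
  assumes cells: "\<And>i. i < n \<Longrightarrow> D i \<in> sets borel"
    and cover: "(\<Union>i<n. D i) = sphere 0 1"
    and overlap: "\<And>j k. j < n \<Longrightarrow> k < n \<Longrightarrow> j \<noteq> k \<Longrightarrow> measure sphere_measure (D j \<inter> D k) = 0"
    and equal_area: "\<And>i. i < n \<Longrightarrow> measure sphere_measure (D i) = 1 / real n"
  shows "(\<Sum>i<n. second_moment (uniform_measure sphere_measure (D i)) u v)
    = real n * second_moment sphere_measure u v"
proof -
  interpret sphere: unit_sphere_distribution sphere_measure
    by (rule unit_sphere_distribution_sphere_measure)
  have "AE x in sphere_measure. x \<in> (\<Union>i<n. D i)"
    using sphere.AE_norm_eq_1 by eventually_elim (simp add: cover)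
  then have partition: "(\<Sum>i<n. \<integral>x. indicator (D i) x * ((x \<bullet> u) * (x \<bullet> v)) \<partial>sphere_measure)
      = second_moment sphere_measure u v"
    unfolding second_moment_def
    using cells overlap sphere.integrable_inner_mult
    by (intro sphere.sum_integral_indicator_partition) auto
  have "(\<Sum>i<n. second_moment (uniform_measure sphere_measure (D i)) u v)
      = (\<Sum>i<n. real n * (\<integral>x. indicator (D i) x * ((x \<bullet> u) * (x \<bullet> v)) \<partial>sphere_measure))"
    using cells equal_area
    by (intro sum.cong refl) (simp add: second_moment_def sphere.integral_uniform_measure)
  also have "\<dots> = real n * second_moment sphere_measure u v"
    by (simp add: sum_distrib_left[symmetric] partition)
  finally show ?thesis .
qed

lemma integral_frame_potential_jittered:
  fixes D :: "nat \<Rightarrow> 'a::euclidean_space set"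
  assumes cells: "\<And>i. i < n \<Longrightarrow> D i \<in> sets borel"
    and cover: "(\<Union>i<n. D i) = sphere 0 1"
    and overlap: "\<And>j k. j < n \<Longrightarrow> k < n \<Longrightarrow> j \<noteq> k \<Longrightarrow> measure sphere_measure (D j \<inter> D k) = 0"
    and equal_area: "\<And>i. i < n \<Longrightarrow> measure sphere_measure (D i) = 1 / real n"
  shows "(\<integral>x. frame_potential n x \<partial>jittered n D) = real n ^ 2 / DIM('a)
    + (\<Sum>i<n. 1 - moment_inner (uniform_measure sphere_measure (D i))
                                  (uniform_measure sphere_measure (D i)))"
proof -
  (* The factors beyond the n cells are irrelevant; taking the sphere measure there makes every
     factor a distribution on the sphere, as integral_frame_potential_PiM requires. *)
  define Q where "Q i = (if i < n then uniform_measure sphere_measure (D i) else sphere_measure)" for i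
  have Q: "unit_sphere_distribution (Q i)" for i
  proof (cases "i < n")
    case True
    then have "measure sphere_measure (D i) \<noteq> 0"
      using equal_area by auto
    with True show ?thesis
      unfolding Q_def
      using unit_sphere_distribution_uniform_measure(1)[OF unit_sphere_distribution_sphere_measure cells]
      by auto
  qed (simp add: Q_def unit_sphere_distribution_sphere_measure)
  have "jittered n D = PiM {..<n} Q"
    unfolding jittered_def by (rule PiM_cong) (auto simp: Q_def)
  then have "(\<integral>x. frame_potential n x \<partial>jittered n D)
      = (\<Sum>i<n. \<Sum>j<n. moment_inner (Q i) (Q j)) + (\<Sum>i<n. 1 - moment_inner (Q i) (Q i))"
    by (simp add: integral_frame_potential_PiM[OF Q])
  also have "(\<Sum>i<n. \<Sum>j<n. moment_inner (Q i) (Q j))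
      = (\<Sum>b\<in>(Basis::'a set). \<Sum>b'\<in>Basis. (\<Sum>i<n. second_moment (Q i) b b')\<^sup>2)"
    by (rule sum_moment_inner)
  also have "\<dots> = (\<Sum>b\<in>(Basis::'a set). \<Sum>b'\<in>Basis. (real n * second_moment sphere_measure b b')\<^sup>2)"
    using sum_second_moment_partition[OF cells cover overlap equal_area] by (simp add: Q_def)
  also have "\<dots> = real n ^ 2 / DIM('a)"
    by (rule sum_square_second_moment_sphere_measure)
  finally show ?thesis
    by (simp add: Q_def)
qed

theorem theorem1:
  fixes D :: "nat \<Rightarrow> 'a::euclidean_space set" and n d :: nat and c :: real
  assumes "DIM('a) = d + 1" and "d \<ge> 1" and "n \<ge> 1"
    and "\<And>i. i < n \<Longrightarrow> D i \<in> sets borel"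
    and "\<And>i. i < n \<Longrightarrow> D i \<subseteq> sphere 0 1"
    and "(\<Union>i<n. D i) = sphere 0 1"
    and "\<And>j k. j < n \<Longrightarrow> k < n \<Longrightarrow> j \<noteq> k \<Longrightarrow> measure sphere_measure (D j \<inter> D k) = 0"
    and "\<And>i. i < n \<Longrightarrow> measure sphere_measure (D i) = 1 / real n"
    and "\<And>i. i < n \<Longrightarrow> diameter (D i) \<le> c / real n powr (1 / real d)"
    and "c / real n powr (1 / real d) < sqrt 2"
  shows "real n ^ 2 / real (d + 1) \<le> (\<integral>x. frame_potential n x \<partial>jittered n D)
    \<and> (\<integral>x. frame_potential n x \<partial>jittered n D)
        \<le> real n ^ 2 / real (d + 1) + real n
           - real n * (1 - c ^ 2 / (2 * real n powr (2 / real d))) ^ 2"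
proof -
  define \<delta> where "\<delta> = c / real n powr (1 / real d)"
  define M where
    "M i = moment_inner (uniform_measure sphere_measure (D i)) (uniform_measure sphere_measure (D i))"
    for i
  have "(1 - \<delta>\<^sup>2 / 2)\<^sup>2 \<le> M i \<and> M i \<le> 1" if "i < n" for i
  proof -
    have D: "D i \<in> sets borel" "D i \<subseteq> sphere 0 1" "measure sphere_measure (D i) \<noteq> 0"
      using assms(4,5,8) that by auto
    show ?thesis
      using moment_inner_uniform_sphere_measure_ge[OF D] assms(9,10) that
        unit_sphere_distribution.moment_inner_self_le_1[OF
          unit_sphere_distribution_uniform_measure(1)[OF unit_sphere_distribution_sphere_measure D(1,3)]]
      by (simp add: M_def \<delta>_def)
  qed
  then have bounds: "0 \<le> (\<Sum>i<n. 1 - M i)" "(\<Sum>i<n. 1 - M i) \<le> real n - real n * (1 - \<delta>\<^sup>2 / 2)\<^sup>2"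
    using sum_mono[of "{..<n}" "\<lambda>i. 1 - M i" "\<lambda>_. 1 - (1 - \<delta>\<^sup>2 / 2)\<^sup>2"]
    by (auto intro: sum_nonneg simp: algebra_simps)
  have c_\<delta>: "c ^ 2 / (2 * real n powr (2 / real d)) = \<delta>\<^sup>2 / 2"
  proof -
    have "(real n powr (1 / real d))\<^sup>2 = real n powr (2 / real d)"
      by (simp add: power2_eq_square powr_add[symmetric])
    then show ?thesis
      by (simp add: \<delta>_def power_divide)
  qed
  have "(\<integral>x. frame_potential n x \<partial>jittered n D) = real n ^ 2 / real (d + 1) + (\<Sum>i<n. 1 - M i)"
    using integral_frame_potential_jittered[OF assms(4,6-8)] assms(1) by (simp add: M_def)
  then show ?thesis
    unfolding c_\<delta> using bounds by simp
qed

end
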